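(* Let $\Delta\ge 4$ be an integer and for positive integers $i,j$ define \[ F(i,j)=(4\Delta-6)\Bigl(\frac{1}{i}+\frac{1}{j}\Bigr)+\Delta^2-6\Delta+3+\frac{6}{\Delta}-(i-j)^2 . \] Then for every integer $i$ with $\left\lfloor \frac{\Delta+3}{2}\right\rfloor+1\le i\le \Delta-1$ we have the strict inequality \[ i\,F(i,2) > F(\Delta,\Delta). \] *)

theory Defs
  imports Complex_Main
begin

definition F :: "nat \<Rightarrow> nat \<Rightarrow> nat \<Rightarrow> real" where
  "F \<Delta> i j = (4 * real \<Delta> - 6) * (1 / real i + 1 / real j) + (real \<Delta>)^2 - 6 * real \<Delta> + 3
     + 6 / real \<Delta> - (real i - real j)^2"

end

theory Submission
  imports Defs
begin

(* After multiplying out, i F(i,2) is (4D-6)(1 + i/2) + i(D^2 - 6D + 3) + 6i/D - i(i-2)^2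
   with D = Delta. Bounding the cubic term by i(D-3)^2, valid for i <= D - 1, leaves the
   function 4D - 6 + (2D - 9) i + 6i/D, increasing in i for D >= 5; its value at the lower
   end i = (D+2)/2 already exceeds F(D,D) = D^2 - 6D + 11 - 6/D. The range of i is empty
   unless D >= 6. *)

lemma F_diagonal:
  assumes "\<Delta> > 0"
  shows "F \<Delta> \<Delta> \<Delta> = (real \<Delta>)\<^sup>2 - 6 * real \<Delta> + 11 - 6 / real \<Delta>"
  using assms by (simp add: F_def field_simps)

lemma mult_F_second_arg_2:
  assumes "\<Delta> > 0" and "i > 0"
  shows "real i * F \<Delta> i 2 =
    (4 * real \<Delta> - 6) * (1 + real i / 2) + real i * ((real \<Delta>)\<^sup>2 - 6 * real \<Delta> + 3)
      + 6 * real i / real \<Delta> - real i * (real i - 2)\<^sup>2"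
  using assms by (simp add: F_def field_simps)

lemma mult_F_second_arg_2_gt_F_diagonal:
  fixes \<Delta> i :: nat
  assumes "\<Delta> \<ge> 5" and "\<Delta> + 2 \<le> 2 * i" and "i + 1 \<le> \<Delta>"
  shows "real i * F \<Delta> i 2 > F \<Delta> \<Delta> \<Delta>"
proof -
  define D x where "D = real \<Delta>" and "x = real i"
  have D: "D \<ge> 5" and x_lower: "D + 2 \<le> 2 * x" and x_upper: "x \<le> D - 1"
    using assms by (simp_all add: D_def x_def)
  have "x > 0" using D x_lower by linarith
  have lhs: "real i * F \<Delta> i 2 =
      (4 * D - 6) * (1 + x / 2) + x * (D\<^sup>2 - 6 * D + 3) + 6 * x / D - x * (x - 2)\<^sup>2"
    using mult_F_second_arg_2 \<open>x > 0\<close> D by (simp add: D_def x_def)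
  have rhs: "F \<Delta> \<Delta> \<Delta> = D\<^sup>2 - 6 * D + 11 - 6 / D"
    using F_diagonal D by (simp add: D_def)
  have cubic_bound: "x * (x - 2)\<^sup>2 \<le> x * (D - 3)\<^sup>2"
    using \<open>x > 0\<close> x_lower x_upper D by (intro mult_left_mono power_mono) auto
  have linear_bound: "(D + 2) / 2 * (2 * D - 9) \<le> x * (2 * D - 9)"
    using x_lower D by (intro mult_right_mono) auto
  have "(4 * D - 6) * (1 + x / 2) + x * (D\<^sup>2 - 6 * D + 3) - x * (D - 3)\<^sup>2
      = 4 * D - 6 + x * (2 * D - 9)"
    by (simp add: algebra_simps power2_eq_square)
  moreover have "(D + 2) / 2 * (2 * D - 9) = D\<^sup>2 - 5 / 2 * D - 9"
    by (simp add: field_simps power2_eq_square)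
  moreover have "6 * x / D > 0" and "6 / D > 0"
    using \<open>x > 0\<close> D by simp_all
  ultimately show ?thesis
    unfolding lhs rhs using cubic_bound linear_bound D by linarith
qed

theorem lemma4p2:
  fixes \<Delta> i :: nat
  assumes "\<Delta> \<ge> 4"
    and "(\<Delta> + 3) div 2 + 1 \<le> i" and "i \<le> \<Delta> - 1"
  shows "real i * F \<Delta> i 2 > F \<Delta> \<Delta> \<Delta>"
proof (rule mult_F_second_arg_2_gt_F_diagonal)
  show "\<Delta> \<ge> 5" and "\<Delta> + 2 \<le> 2 * i" and "i + 1 \<le> \<Delta>"
    using assms by linarith+
qed

end
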